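(* Let $G$ be a bipartite graph with vertex classes $(A,B)$ and density $d=d_G(A,B)$, and let $\mathcal A=\{A_i\}_i$ and $\mathcal B=\{B_j\}_j$ be partitions of $A$ and $B$ respectively such that $\mathcal A\cup\mathcal B$ is weak $\epsilon$-regular in the following sense: for every $S\subseteq A$, $T\subseteq B$ with $|S|\ge\epsilon|A|$, $|T|\ge\epsilon|B|$, writing $S_i=S\cap A_i$, $T_j=T\cap B_j$ and $d_{i,j}=d_G(A_i,B_j)$, $$\sum_{i,j}\frac{|S_i||T_j|}{|S||T|}\,\big|d_G(S_i,T_j)-d_{i,j}\big|\le\epsilon .$$ If $|A|,|B|\ge 8/\epsilon^4$, then one can turn $G$ into a bipartite graph $\widetilde G$ on the same vertex classes for which $(A,B)$ is a $2\epsilon$-regular pair, by adding/removing at most $\Delta$ edges between $A$ and $B$, where $$\Delta=\sum_{i,j}|d_{i,j}-d|\,|A_i||B_j| .$$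
   Context: $e_G(X,Y)$ is the number of pairs $(u,v)\in X\times Y$ with $uv\in E(G)$, $d_G(X,Y)=e_G(X,Y)/(|X||Y|)$ (taken as $0$ when $X$ or $Y$ is empty). A pair $(A,B)$ is $\epsilon$-regular if $|d(A,B)-d(A',B')|\le\epsilon$ for all $A'\subseteq A$, $B'\subseteq B$ with $|A'|\ge\epsilon|A|$, $|B'|\ge\epsilon|B|$. *)

theory Defs
  imports Main "HOL-Library.Disjoint_Sets" Complex_Main
begin

(* A bipartite graph with vertex classes A, B is given by its edge set E \<subseteq> A \<times> B;
   (u,v) \<in> E means uv is an edge with u \<in> A, v \<in> B. *)

definition e_G :: "('a \<times> 'a) set \<Rightarrow> 'a set \<Rightarrow> 'a set \<Rightarrow> nat" where
  "e_G E X Y = card {p \<in> X \<times> Y. p \<in> E}"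

definition d_G :: "('a \<times> 'a) set \<Rightarrow> 'a set \<Rightarrow> 'a set \<Rightarrow> real" where
  "d_G E X Y = (if X = {} \<or> Y = {} then 0
                else real (e_G E X Y) / (real (card X) * real (card Y)))"

definition eps_regular :: "('a \<times> 'a) set \<Rightarrow> real \<Rightarrow> 'a set \<Rightarrow> 'a set \<Rightarrow> bool" where
  "eps_regular E \<epsilon> A B \<longleftrightarrow>
     (\<forall>A' B'. A' \<subseteq> A \<and> B' \<subseteq> B \<and> real (card A') \<ge> \<epsilon> * real (card A)
        \<and> real (card B') \<ge> \<epsilon> * real (card B)
        \<longrightarrow> \<bar>d_G E A B - d_G E A' B'\<bar> \<le> \<epsilon>)"

definition weak_regular :: "('a \<times> 'a) set \<Rightarrow> real \<Rightarrow> 'a set \<Rightarrow> 'a set \<Rightarrow> 'a set set \<Rightarrow> 'a set set \<Rightarrow> bool" where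
  "weak_regular E \<epsilon> A B \<A> \<B> \<longleftrightarrow>
     (\<forall>S T. S \<subseteq> A \<and> T \<subseteq> B \<and> real (card S) \<ge> \<epsilon> * real (card A)
        \<and> real (card T) \<ge> \<epsilon> * real (card B) \<longrightarrow>
        (\<Sum>Ai\<in>\<A>. \<Sum>Bj\<in>\<B>.
           real (card (S \<inter> Ai)) * real (card (T \<inter> Bj)) / (real (card S) * real (card T))
           * \<bar>d_G E (S \<inter> Ai) (T \<inter> Bj) - d_G E Ai Bj\<bar>) \<le> \<epsilon>)"

end

theory Submission
  imports Defs "HOL-Probability.Hoeffding"
begin

text \<open>
  Modify \<open>G\<close> at random, independently for every pair \<open>(a, b) \<in> A \<times> B\<close>, with a probability that
  depends only on the block \<open>A\<^sub>i \<times> B\<^sub>j\<close> containing the pair and on whether it is an edge: in a block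
  of density \<open>\<delta> > d\<close> edges are deleted, in one with \<open>\<delta> < d\<close> non-edges are added, so that the
  expected density of the block becomes \<open>d + \<eta> (\<delta> - d)\<close> at expected cost \<open>(1 - \<eta>) |\<delta> - d|\<close> per
  pair; take \<open>\<eta> = \<epsilon>/2\<close>. By weak regularity, the expected number of edges between any large
  \<open>S, T\<close> is then within \<open>(\<eta> + \<epsilon>) |S| |T|\<close> of \<open>d |S| |T|\<close>, and between \<open>A\<close> and \<open>B\<close> it is exactly
  \<open>d |A| |B|\<close>. If \<open>\<Delta> > 4 \<epsilon>\<^sup>3 |A| |B|\<close>, Hoeffding's inequality and a union bound over the at most
  \<open>2\<^bsup>|A| + |B|\<^esup>\<close> pairs \<open>(S, T)\<close> (this is where \<open>|A|, |B| \<ge> 8 / \<epsilon>\<^sup>4\<close> is used) give an outcome that is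
  within \<open>\<epsilon>/4 |S| |T|\<close> of these expectations everywhere and costs less than \<open>\<Delta>\<close>. If
  \<open>\<Delta> \<le> 4 \<epsilon>\<^sup>3 |A| |B|\<close>, the same estimate with \<open>\<eta> = 1\<close> shows that \<open>G\<close> itself is \<open>2\<epsilon>\<close>-regular.
\<close>

lemma e_G_eq_card_Int: "e_G E X Y = card (X \<times> Y \<inter> E)"
  unfolding e_G_def by (simp add: Int_def)

lemma e_G_eq_d_G_mult:
  "finite X \<Longrightarrow> finite Y \<Longrightarrow> real (e_G E X Y) = d_G E X Y * card X * card Y"
  unfolding d_G_def by (auto simp: e_G_def)

lemma d_G_nonneg [simp]: "0 \<le> d_G E X Y"
  unfolding d_G_def by auto

lemma d_G_le_1 [simp]: "d_G E X Y \<le> 1"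
proof (cases "finite X \<and> finite Y \<and> X \<noteq> {} \<and> Y \<noteq> {}")
  case True
  then have "e_G E X Y \<le> card (X \<times> Y)"
    unfolding e_G_eq_card_Int by (intro card_mono) auto
  then have "real (e_G E X Y) \<le> real (card X) * real (card Y)"
    by (metis card_cartesian_product of_nat_le_iff of_nat_mult)
  with True show ?thesis
    unfolding d_G_def by (auto simp: divide_le_eq_1 card_gt_0_iff)
qed (auto simp: d_G_def)

lemma abs_d_G_diff_le:
  fixes d c :: real
  assumes "finite X" "finite Y" "X \<noteq> {}" "Y \<noteq> {}"
    and "\<bar>real (e_G E X Y) - d * (card X * card Y)\<bar> \<le> c * (card X * card Y)"
  shows "\<bar>d_G E X Y - d\<bar> \<le> c"
proof -
  have n: "real (card X * card Y) > 0"
    using assms(1-4) by (simp add: card_gt_0_iff)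
  have "real (e_G E X Y) - d * (card X * card Y) = (d_G E X Y - d) * (card X * card Y)"
    by (simp add: e_G_eq_d_G_mult assms(1,2) algebra_simps)
  then have "\<bar>d_G E X Y - d\<bar> * (card X * card Y) = \<bar>real (e_G E X Y) - d * (card X * card Y)\<bar>"
    by (simp add: abs_mult)
  with assms(5) n show ?thesis
    by (metis mult_le_cancel_right_pos of_nat_mult)
qed

lemma eps_regular_if_ge_1: "1 \<le> \<epsilon> \<Longrightarrow> eps_regular E \<epsilon> A B"
  unfolding eps_regular_def
  using d_G_nonneg d_G_le_1 by (smt (verit))

lemma sum_partition_on:
  assumes "finite A" "partition_on A P" "S \<subseteq> A"
  shows "sum f S = (\<Sum>X\<in>P. sum f (S \<inter> X))"
proof -
  have "S = (\<Union>X\<in>P. S \<inter> X)"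
    using assms(2,3) partition_onD1 by fastforce
  also have "sum f \<dots> = (\<Sum>X\<in>P. sum f (S \<inter> X))"
    using assms partition_onD2[OF assms(2)] finite_elements[OF assms(1,2)]
    by (intro sum.UNION_disjoint) (auto simp: disjoint_def intro: finite_subset)
  finally show ?thesis .
qed

lemma sum_product_partition:
  assumes "finite A" "finite B" "partition_on A \<A>" "partition_on B \<B>" "S \<subseteq> A" "T \<subseteq> B"
  shows "(\<Sum>p\<in>S \<times> T. f p) = (\<Sum>X\<in>\<A>. \<Sum>Y\<in>\<B>. \<Sum>p\<in>(S \<inter> X) \<times> (T \<inter> Y). f p)"
proof -
  have "(\<Sum>p\<in>S \<times> T. f p) = (\<Sum>a\<in>S. \<Sum>b\<in>T. f (a, b))"
    by (simp add: sum.cartesian_product)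
  also have "\<dots> = (\<Sum>X\<in>\<A>. \<Sum>a\<in>S \<inter> X. \<Sum>Y\<in>\<B>. \<Sum>b\<in>T \<inter> Y. f (a, b))"
    by (simp only: sum_partition_on[OF assms(1,3,5)] sum_partition_on[OF assms(2,4,6)])
  also have "\<dots> = (\<Sum>X\<in>\<A>. \<Sum>Y\<in>\<B>. \<Sum>p\<in>(S \<inter> X) \<times> (T \<inter> Y). f p)"
    by (simp add: sum.swap[where B = \<B>] sum.cartesian_product)
  finally show ?thesis .
qed

lemma sum_split_membership:
  fixes g :: "bool \<Rightarrow> real"
  assumes "finite K"
  shows "(\<Sum>p\<in>K. g (p \<in> C)) = g True * card (K \<inter> C) + g False * card (K - C)"
proof -
  have "(\<Sum>p\<in>K. g (p \<in> C)) = (\<Sum>p\<in>K \<inter> C. g True) + (\<Sum>p\<in>K - C. g False)"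
    using assms by (subst sum.Int_Diff[of _ _ C]) (auto intro: sum.cong)
  then show ?thesis by simp
qed

definition part_of :: "'a set set \<Rightarrow> 'a \<Rightarrow> 'a set" where
  "part_of P x = (THE X. X \<in> P \<and> x \<in> X)"

lemma part_of_eq: "partition_on A P \<Longrightarrow> X \<in> P \<Longrightarrow> x \<in> X \<Longrightarrow> part_of P x = X"
  unfolding part_of_def
  by (rule the_equality) (use partition_onD2[of A P] in \<open>auto simp: disjoint_def\<close>)

lemma Pi_bernoulli_Hoeffding:
  fixes q :: "'p \<Rightarrow> real" and h :: "'p \<Rightarrow> bool \<Rightarrow> real"
  assumes P: "finite P" and I: "I \<subseteq> P" "I \<noteq> {}"
    and q: "\<And>p. p \<in> P \<Longrightarrow> q p \<in> {0..1}"
    and h: "\<And>p b. p \<in> I \<Longrightarrow> h p b \<in> {0..1}" and t: "0 \<le> t"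
  defines "M \<equiv> Pi_pmf P False (\<lambda>p. bernoulli_pmf (q p))"
    and "\<mu> \<equiv> \<Sum>p\<in>I. h p True * q p + h p False * (1 - q p)"
  shows "measure_pmf.prob M {\<omega>. \<mu> + t \<le> (\<Sum>p\<in>I. h p (\<omega> p))} \<le> exp (- 2 * t\<^sup>2 / card I)"
    and "measure_pmf.prob M {\<omega>. t \<le> \<bar>(\<Sum>p\<in>I. h p (\<omega> p)) - \<mu>\<bar>} \<le> 2 * exp (- 2 * t\<^sup>2 / card I)"
proof -
  have finI: "finite I"
    using P I(1) finite_subset by blast
  have expectation: "measure_pmf.expectation M (\<lambda>\<omega>. h p (\<omega> p)) = h p True * q p + h p False * (1 - q p)"
    if "p \<in> I" for p
  proof -
    have "map_pmf (\<lambda>\<omega>. \<omega> p) M = bernoulli_pmf (q p)"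
      unfolding M_def using that I P by (subst Pi_pmf_component) auto
    then have "measure_pmf.expectation M (\<lambda>\<omega>. h p (\<omega> p)) = measure_pmf.expectation (bernoulli_pmf (q p)) (h p)"
      by (metis integral_map_pmf)
    then show ?thesis
      using q[of p] that I by auto
  qed
  interpret Hoeffding_ineq "measure_pmf M" I "\<lambda>p \<omega>. h p (\<omega> p)" "\<lambda>_. 0" "\<lambda>_. 1" \<mu>
  proof unfold_locales
    show "prob_space.indep_vars (measure_pmf M) (\<lambda>_. borel) (\<lambda>p \<omega>. h p (\<omega> p)) I"
      unfolding M_def
      by (intro prob_space.indep_vars_compose2[OF _ prob_space.indep_vars_subset[OF _ indep_vars_Pi_pmf[OF P] I(1)]])
         (auto simp: measure_pmf.prob_space_axioms)
  qed (use finI h expectation in \<open>auto simp: \<mu>_def\<close>)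
  have "0 < (\<Sum>p\<in>I. (1 - 0 :: real)\<^sup>2)"
    using finI I(2) by (simp add: card_gt_0_iff)
  from Hoeffding_ineq_ge[OF t this] Hoeffding_ineq_abs_ge[OF t this]
  show "measure_pmf.prob M {\<omega>. \<mu> + t \<le> (\<Sum>p\<in>I. h p (\<omega> p))} \<le> exp (- 2 * t\<^sup>2 / card I)"
    and "measure_pmf.prob M {\<omega>. t \<le> \<bar>(\<Sum>p\<in>I. h p (\<omega> p)) - \<mu>\<bar>} \<le> 2 * exp (- 2 * t\<^sup>2 / card I)"
    by simp_all
qed

lemma union_bound_estimate:
  fixes \<epsilon> :: real and m n :: nat
  assumes \<epsilon>: "0 < \<epsilon>" "\<epsilon> \<le> 1" and m: "8 / \<epsilon>^4 \<le> m" and n: "8 / \<epsilon>^4 \<le> n"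
  shows "2 ^ (m + n) * (2 * exp (- (\<epsilon>^4 * (m * n) / 2))) + exp (- (8 * \<epsilon>^8 * (m * n))) < 1"
proof -
  have m': "8 \<le> \<epsilon>^4 * m" and n': "8 \<le> \<epsilon>^4 * n"
    using \<epsilon> m n by (simp_all add: field_simps)
  have "\<epsilon>^4 \<le> 1"
    using \<epsilon> by (simp add: power_le_one)
  then have "\<epsilon>^4 * m \<le> m" "\<epsilon>^4 * n \<le> n"
    by (simp_all add: mult_left_le_one_le)
  have "8 * m \<le> \<epsilon>^4 * (m * n)" "8 * n \<le> \<epsilon>^4 * (m * n)"
    using mult_right_mono[OF m', of n] mult_right_mono[OF n', of m] by (simp_all add: algebra_simps)
  then have exponent: "2 * (m + n) \<le> \<epsilon>^4 * (m * n) / 2"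
    by simp
  have "(2::real) ^ (m + n) \<le> exp 1 ^ (m + n)"
    using exp_ge_add_one_self[of 1] by (intro power_mono) auto
  then have "(2::real) ^ (m + n) \<le> exp (m + n)"
    by (simp add: exp_of_nat_mult[symmetric])
  then have "2 ^ (m + n) * (2 * exp (- (\<epsilon>^4 * (m * n) / 2))) \<le> exp (m + n) * (2 * exp (- (2 * (m + n))))"
    using exponent by (intro mult_mono) auto
  also have "\<dots> = 2 * exp (- (m + n))"
    by (simp add: mult.left_commute[of "exp _"] exp_add[symmetric])
  also have "\<dots> \<le> 2 * exp (- 16)"
    using \<open>\<epsilon>^4 * m \<le> m\<close> \<open>\<epsilon>^4 * n \<le> n\<close> m' n' by simp
  also have "\<dots> < 1/2"
    using exp_ge_add_one_self[of 16] by (simp add: exp_minus field_simps)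
  finally have first: "2 ^ (m + n) * (2 * exp (- (\<epsilon>^4 * (m * n) / 2))) < 1/2" .
  have "64 \<le> (\<epsilon>^4 * m) * (\<epsilon>^4 * n)"
    using mult_mono[OF m' n'] by simp
  then have "2 \<le> 8 * \<epsilon>^8 * (m * n)"
    by (simp add: algebra_simps power_add[symmetric])
  then have "exp (- (8 * \<epsilon>^8 * (m * n))) \<le> exp (- 2)"
    by simp
  also have "\<dots> < 1/2"
    using exp_ge_add_one_self[of 2] by (simp add: exp_minus field_simps)
  finally show ?thesis
    using first by simp
qed

definition del_prob :: "real \<Rightarrow> real \<Rightarrow> real \<Rightarrow> real" where
  "del_prob \<eta> d \<delta> = (if d < \<delta> then (1 - \<eta>) * (\<delta> - d) / \<delta> else 0)"

definition add_prob :: "real \<Rightarrow> real \<Rightarrow> real \<Rightarrow> real" where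
  "add_prob \<eta> d \<delta> = (if \<delta> < d then (1 - \<eta>) * (d - \<delta>) / (1 - \<delta>) else 0)"

context
  fixes \<eta> d \<delta> :: real
  assumes \<eta>: "0 \<le> \<eta>" "\<eta> \<le> 1" and d: "0 \<le> d" "d \<le> 1" and \<delta>: "0 \<le> \<delta>" "\<delta> \<le> 1"
begin

lemma del_add_prob_bounds:
  "0 \<le> del_prob \<eta> d \<delta>" "0 \<le> add_prob \<eta> d \<delta>" "del_prob \<eta> d \<delta> + add_prob \<eta> d \<delta> \<le> 1"
proof -
  have "(1 - \<eta>) * (\<delta> - d) \<le> \<delta>" if "d < \<delta>"
  proof -
    have "(1 - \<eta>) * (\<delta> - d) \<le> \<delta> - d"
      using that \<eta> by (intro mult_left_le_one_le) auto
    then show ?thesis using d by linarith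
  qed
  moreover have "(1 - \<eta>) * (d - \<delta>) \<le> 1 - \<delta>" if "\<delta> < d"
  proof -
    have "(1 - \<eta>) * (d - \<delta>) \<le> d - \<delta>"
      using that \<eta> by (intro mult_left_le_one_le) auto
    then show ?thesis using d by linarith
  qed
  ultimately show "0 \<le> del_prob \<eta> d \<delta>" "0 \<le> add_prob \<eta> d \<delta>" "del_prob \<eta> d \<delta> + add_prob \<eta> d \<delta> \<le> 1"
    using \<eta> d \<delta> by (auto simp: del_prob_def add_prob_def divide_simps)
qed

lemma del_add_prob_expected_density:
  "(1 - del_prob \<eta> d \<delta>) * \<delta>' + add_prob \<eta> d \<delta> * (1 - \<delta>')
     = d + \<eta> * (\<delta> - d) + (1 - del_prob \<eta> d \<delta> - add_prob \<eta> d \<delta>) * (\<delta>' - \<delta>)"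
  using d \<delta> by (auto simp: del_prob_def add_prob_def field_simps)

lemma del_add_prob_expected_cost:
  "del_prob \<eta> d \<delta> * \<delta> + add_prob \<eta> d \<delta> * (1 - \<delta>) = (1 - \<eta>) * \<bar>\<delta> - d\<bar>"
  using d \<delta> by (auto simp: del_prob_def add_prob_def field_simps)

end

locale weakly_regular_partition =
  fixes E :: "('a \<times> 'a) set" and A B :: "'a set" and \<A> \<B> :: "'a set set" and \<epsilon> :: real
  assumes finite_A: "finite A" and finite_B: "finite B" and E_subset: "E \<subseteq> A \<times> B"
    and partition_A: "partition_on A \<A>" and partition_B: "partition_on B \<B>"
    and eps_pos: "0 < \<epsilon>" and weak_regular: "weak_regular E \<epsilon> A B \<A> \<B>"
begin

abbreviation d :: real where
  "d \<equiv> d_G E A B"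

definition Delta :: real where
  "Delta = (\<Sum>X\<in>\<A>. \<Sum>Y\<in>\<B>. \<bar>d_G E X Y - d\<bar> * real (card X) * real (card Y))"

definition large_pair :: "real \<Rightarrow> 'a set \<Rightarrow> 'a set \<Rightarrow> bool" where
  "large_pair c S T \<longleftrightarrow> S \<subseteq> A \<and> T \<subseteq> B \<and> c * card A \<le> card S \<and> c * card B \<le> card T"

definition block_prob :: "real \<Rightarrow> 'a set \<Rightarrow> 'a set \<Rightarrow> bool \<Rightarrow> real" where
  "block_prob \<eta> X Y b = (if b then 1 - del_prob \<eta> d (d_G E X Y) else add_prob \<eta> d (d_G E X Y))"

definition edge_prob :: "real \<Rightarrow> 'a \<times> 'a \<Rightarrow> real" where
  "edge_prob \<eta> p = block_prob \<eta> (part_of \<A> (fst p)) (part_of \<B> (snd p)) (p \<in> E)"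

lemma Delta_nonneg: "0 \<le> Delta"
  unfolding Delta_def by (intro sum_nonneg) auto

lemma block_subset: "X \<in> \<A> \<Longrightarrow> X \<subseteq> A" "Y \<in> \<B> \<Longrightarrow> Y \<subseteq> B"
  using partition_onD1[OF partition_A] partition_onD1[OF partition_B] by auto

lemma Int_block: "X \<in> \<A> \<Longrightarrow> A \<inter> X = X" "Y \<in> \<B> \<Longrightarrow> B \<inter> Y = Y"
  using block_subset by auto

lemma finite_block: "X \<in> \<A> \<Longrightarrow> finite X" "Y \<in> \<B> \<Longrightarrow> finite Y"
  using block_subset finite_A finite_B finite_subset by metis+

lemma card_product_partition:
  assumes "S \<subseteq> A" "T \<subseteq> B"
  shows "real (card S) * real (card T) = (\<Sum>X\<in>\<A>. \<Sum>Y\<in>\<B>. real (card (S \<inter> X)) * real (card (T \<inter> Y)))"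
  using sum_product_partition[OF finite_A finite_B partition_A partition_B assms, of "\<lambda>_. 1::real"]
  by (simp add: card_cartesian_product)

lemma sum_blockwise:
  assumes "X \<in> \<A>" "Y \<in> \<B>" "S \<subseteq> X" "T \<subseteq> Y"
  shows "(\<Sum>p\<in>S \<times> T. g (part_of \<A> (fst p)) (part_of \<B> (snd p)) (p \<in> E))
           = (g X Y True * d_G E S T + g X Y False * (1 - d_G E S T)) * (card S * card T)"
proof -
  have fin: "finite S" "finite T"
    using assms finite_block finite_subset by metis+
  have "(\<Sum>p\<in>S \<times> T. g (part_of \<A> (fst p)) (part_of \<B> (snd p)) (p \<in> E)) = (\<Sum>p\<in>S \<times> T. g X Y (p \<in> E))"
  proof (intro sum.cong refl)
    fix p assume "p \<in> S \<times> T"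
    then have "part_of \<A> (fst p) = X" "part_of \<B> (snd p) = Y"
      using assms part_of_eq[OF partition_A] part_of_eq[OF partition_B] by auto
    then show "g (part_of \<A> (fst p)) (part_of \<B> (snd p)) (p \<in> E) = g X Y (p \<in> E)"
      by simp
  qed
  also have "\<dots> = g X Y True * card (S \<times> T \<inter> E) + g X Y False * card (S \<times> T - E)"
    using fin by (intro sum_split_membership) auto
  also have "real (card (S \<times> T \<inter> E)) = d_G E S T * (card S * card T)"
    using e_G_eq_d_G_mult[OF fin] by (simp add: e_G_eq_card_Int)
  also have "real (card (S \<times> T - E)) = card S * card T - d_G E S T * (card S * card T)"
  proof -
    have "card (S \<times> T \<inter> E) + card (S \<times> T - E) = card S * card T"
      using card_Int_Diff[of "S \<times> T" E] fin by (simp add: card_cartesian_product)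
    then have "real (card (S \<times> T \<inter> E)) + card (S \<times> T - E) = real (card S) * card T"
      by (metis of_nat_add of_nat_mult)
    with e_G_eq_d_G_mult[OF fin, of E] show ?thesis
      by (simp add: e_G_eq_card_Int)
  qed
  finally show ?thesis
    by (simp add: algebra_simps)
qed

lemma sum_edge_prob_deviation:
  assumes \<eta>: "0 \<le> \<eta>" "\<eta> \<le> 1" and ST: "S \<subseteq> A" "T \<subseteq> B"
  shows "(\<Sum>p\<in>S \<times> T. edge_prob \<eta> p) - d * (card S * card T)
    = (\<Sum>X\<in>\<A>. \<Sum>Y\<in>\<B>. (\<eta> * (d_G E X Y - d)
         + (1 - del_prob \<eta> d (d_G E X Y) - add_prob \<eta> d (d_G E X Y)) * (d_G E (S \<inter> X) (T \<inter> Y) - d_G E X Y))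
         * (card (S \<inter> X) * card (T \<inter> Y)))"
proof -
  have "(\<Sum>p\<in>S \<times> T. edge_prob \<eta> p) = (\<Sum>X\<in>\<A>. \<Sum>Y\<in>\<B>. \<Sum>p\<in>(S \<inter> X) \<times> (T \<inter> Y). edge_prob \<eta> p)"
    by (rule sum_product_partition[OF finite_A finite_B partition_A partition_B ST])
  also have "\<dots> = (\<Sum>X\<in>\<A>. \<Sum>Y\<in>\<B>. (d + (\<eta> * (d_G E X Y - d)
         + (1 - del_prob \<eta> d (d_G E X Y) - add_prob \<eta> d (d_G E X Y)) * (d_G E (S \<inter> X) (T \<inter> Y) - d_G E X Y)))
         * (card (S \<inter> X) * card (T \<inter> Y)))"
  proof (intro sum.cong refl)
    fix X Y assume XY: "X \<in> \<A>" "Y \<in> \<B>"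
    show "(\<Sum>p\<in>(S \<inter> X) \<times> (T \<inter> Y). edge_prob \<eta> p) = (d + (\<eta> * (d_G E X Y - d)
         + (1 - del_prob \<eta> d (d_G E X Y) - add_prob \<eta> d (d_G E X Y)) * (d_G E (S \<inter> X) (T \<inter> Y) - d_G E X Y)))
         * (card (S \<inter> X) * card (T \<inter> Y))"
      unfolding edge_prob_def sum_blockwise[OF XY Int_lower2 Int_lower2]
      using del_add_prob_expected_density[of \<eta> d "d_G E X Y" "d_G E (S \<inter> X) (T \<inter> Y)"]
      by (simp add: block_prob_def \<eta> d_G_nonneg d_G_le_1)
  qed
  also have "\<dots> = d * (\<Sum>X\<in>\<A>. \<Sum>Y\<in>\<B>. real (card (S \<inter> X) * card (T \<inter> Y)))
    + (\<Sum>X\<in>\<A>. \<Sum>Y\<in>\<B>. (\<eta> * (d_G E X Y - d)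
         + (1 - del_prob \<eta> d (d_G E X Y) - add_prob \<eta> d (d_G E X Y)) * (d_G E (S \<inter> X) (T \<inter> Y) - d_G E X Y))
         * (card (S \<inter> X) * card (T \<inter> Y)))"
    by (simp only: distrib_right sum.distrib sum_distrib_left)
  finally show ?thesis
    using card_product_partition[OF ST] by simp
qed

lemma weak_regular_sum_le:
  assumes "large_pair \<epsilon> S T"
  shows "(\<Sum>X\<in>\<A>. \<Sum>Y\<in>\<B>. real (card (S \<inter> X) * card (T \<inter> Y)) * \<bar>d_G E (S \<inter> X) (T \<inter> Y) - d_G E X Y\<bar>)
           \<le> \<epsilon> * (card S * card T)"
proof (cases "S = {} \<or> T = {}")
  case False
  have "finite S" "finite T"
    using assms finite_A finite_B finite_subset unfolding large_pair_def by metis+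
  with False have "0 < card S" "0 < card T"
    by (simp_all add: card_gt_0_iff)
  then have n: "0 < real (card S * card T)"
    by simp
  let ?w = "\<lambda>X Y. real (card (S \<inter> X)) * real (card (T \<inter> Y)) / (real (card S) * real (card T))
          * \<bar>d_G E (S \<inter> X) (T \<inter> Y) - d_G E X Y\<bar>"
  have "(\<Sum>X\<in>\<A>. \<Sum>Y\<in>\<B>. ?w X Y) \<le> \<epsilon>"
    using weak_regular assms unfolding weak_regular_def large_pair_def by blast
  then have "real (card S * card T) * (\<Sum>X\<in>\<A>. \<Sum>Y\<in>\<B>. ?w X Y) \<le> real (card S * card T) * \<epsilon>"
    using n by (intro mult_left_mono) auto
  moreover have "real (card S * card T) * (\<Sum>X\<in>\<A>. \<Sum>Y\<in>\<B>. ?w X Y)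
      = (\<Sum>X\<in>\<A>. \<Sum>Y\<in>\<B>. real (card (S \<inter> X) * card (T \<inter> Y)) * \<bar>d_G E (S \<inter> X) (T \<inter> Y) - d_G E X Y\<bar>)"
    unfolding sum_distrib_left using \<open>0 < card S\<close> \<open>0 < card T\<close> by (intro sum.cong refl) (simp add: field_simps)
  ultimately show ?thesis
    by (simp add: mult.commute)
qed auto

lemma block_deviation_bounds:
  assumes ST: "S \<subseteq> A" "T \<subseteq> B"
  shows "\<bar>\<Sum>X\<in>\<A>. \<Sum>Y\<in>\<B>. (d_G E X Y - d) * (card (S \<inter> X) * card (T \<inter> Y))\<bar> \<le> card S * card T"
    and "\<bar>\<Sum>X\<in>\<A>. \<Sum>Y\<in>\<B>. (d_G E X Y - d) * (card (S \<inter> X) * card (T \<inter> Y))\<bar> \<le> Delta"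
proof -
  let ?n = "\<lambda>X Y. real (card (S \<inter> X) * card (T \<inter> Y))"
  have split: "(\<Sum>X\<in>\<A>. \<Sum>Y\<in>\<B>. (d_G E X Y - d) * ?n X Y)
      = (\<Sum>X\<in>\<A>. \<Sum>Y\<in>\<B>. d_G E X Y * ?n X Y) - d * (card S * card T)"
    by (simp add: card_product_partition[OF ST] sum_distrib_left sum_subtractf left_diff_distrib)
  have "0 \<le> (\<Sum>X\<in>\<A>. \<Sum>Y\<in>\<B>. d_G E X Y * ?n X Y)"
    by (intro sum_nonneg mult_nonneg_nonneg d_G_nonneg) auto
  moreover have "(\<Sum>X\<in>\<A>. \<Sum>Y\<in>\<B>. d_G E X Y * ?n X Y) \<le> (\<Sum>X\<in>\<A>. \<Sum>Y\<in>\<B>. ?n X Y)"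
    by (intro sum_mono mult_left_le_one_le d_G_le_1 d_G_nonneg) auto
  moreover have "0 \<le> d * real (card S * card T)" "d * real (card S * card T) \<le> real (card S * card T)"
    by (simp_all add: mult_left_le_one_le)
  moreover have "(\<Sum>X\<in>\<A>. \<Sum>Y\<in>\<B>. ?n X Y) = real (card S * card T)"
    using card_product_partition[OF ST] by simp
  ultimately show "\<bar>\<Sum>X\<in>\<A>. \<Sum>Y\<in>\<B>. (d_G E X Y - d) * ?n X Y\<bar> \<le> card S * card T"
    unfolding split by linarith
  have "\<bar>\<Sum>X\<in>\<A>. \<Sum>Y\<in>\<B>. (d_G E X Y - d) * ?n X Y\<bar> \<le> (\<Sum>X\<in>\<A>. \<Sum>Y\<in>\<B>. \<bar>(d_G E X Y - d) * ?n X Y\<bar>)"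
    by (rule order.trans[OF sum_abs sum_mono[OF sum_abs]])
  also have "\<dots> \<le> Delta"
    unfolding Delta_def
  proof (intro sum_mono)
    fix X Y assume "X \<in> \<A>" "Y \<in> \<B>"
    then have "card (S \<inter> X) \<le> card X" "card (T \<inter> Y) \<le> card Y"
      using finite_block by (auto intro: card_mono)
    then show "\<bar>(d_G E X Y - d) * ?n X Y\<bar> \<le> \<bar>d_G E X Y - d\<bar> * real (card X) * real (card Y)"
      by (simp add: abs_mult mult.assoc mult_left_mono mult_mono)
  qed
  finally show "\<bar>\<Sum>X\<in>\<A>. \<Sum>Y\<in>\<B>. (d_G E X Y - d) * ?n X Y\<bar> \<le> Delta" .
qed

lemma sum_edge_prob_deviation_le:
  assumes \<eta>: "0 \<le> \<eta>" "\<eta> \<le> 1" and large: "large_pair \<epsilon> S T"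
  shows "\<bar>(\<Sum>p\<in>S \<times> T. edge_prob \<eta> p) - d * (card S * card T)\<bar>
    \<le> \<eta> * \<bar>\<Sum>X\<in>\<A>. \<Sum>Y\<in>\<B>. (d_G E X Y - d) * (card (S \<inter> X) * card (T \<inter> Y))\<bar> + \<epsilon> * (card S * card T)"
proof -
  have ST: "S \<subseteq> A" "T \<subseteq> B"
    using large unfolding large_pair_def by auto
  let ?n = "\<lambda>X Y. real (card (S \<inter> X) * card (T \<inter> Y))"
  let ?w = "\<lambda>X Y. 1 - del_prob \<eta> d (d_G E X Y) - add_prob \<eta> d (d_G E X Y)"
  let ?D = "\<Sum>X\<in>\<A>. \<Sum>Y\<in>\<B>. (d_G E X Y - d) * ?n X Y"
  let ?R = "\<Sum>X\<in>\<A>. \<Sum>Y\<in>\<B>. ?w X Y * (d_G E (S \<inter> X) (T \<inter> Y) - d_G E X Y) * ?n X Y"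
  have "(\<Sum>p\<in>S \<times> T. edge_prob \<eta> p) - d * (card S * card T) = \<eta> * ?D + ?R"
    unfolding sum_edge_prob_deviation[OF \<eta> ST]
    by (simp add: distrib_right sum.distrib sum_distrib_left mult.assoc)
  moreover have "\<bar>?R\<bar> \<le> (\<Sum>X\<in>\<A>. \<Sum>Y\<in>\<B>. ?n X Y * \<bar>d_G E (S \<inter> X) (T \<inter> Y) - d_G E X Y\<bar>)"
  proof (rule order.trans[OF sum_abs sum_mono[OF order.trans[OF sum_abs sum_mono]]])
    fix X Y
    have "0 \<le> del_prob \<eta> d (d_G E X Y)" "0 \<le> add_prob \<eta> d (d_G E X Y)"
      "del_prob \<eta> d (d_G E X Y) + add_prob \<eta> d (d_G E X Y) \<le> 1"
      using del_add_prob_bounds[of \<eta> d "d_G E X Y"] \<eta> by auto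
    then have w: "0 \<le> ?w X Y" "?w X Y \<le> 1"
      by auto
    then have "\<bar>?w X Y * (d_G E (S \<inter> X) (T \<inter> Y) - d_G E X Y) * ?n X Y\<bar>
        = ?w X Y * (?n X Y * \<bar>d_G E (S \<inter> X) (T \<inter> Y) - d_G E X Y\<bar>)"
      by (simp add: abs_mult mult_ac)
    also have "\<dots> \<le> ?n X Y * \<bar>d_G E (S \<inter> X) (T \<inter> Y) - d_G E X Y\<bar>"
      using w by (intro mult_left_le_one_le) auto
    finally show "\<bar>?w X Y * (d_G E (S \<inter> X) (T \<inter> Y) - d_G E X Y) * ?n X Y\<bar>
        \<le> ?n X Y * \<bar>d_G E (S \<inter> X) (T \<inter> Y) - d_G E X Y\<bar>" .
  qed
  moreover have "\<bar>\<eta> * ?D + ?R\<bar> \<le> \<eta> * \<bar>?D\<bar> + \<bar>?R\<bar>"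
    using abs_triangle_ineq[of "\<eta> * ?D" ?R] \<eta> by (simp add: abs_mult)
  ultimately show ?thesis
    using weak_regular_sum_le[OF large] by linarith
qed

lemma edge_prob_1: "edge_prob 1 p = of_bool (p \<in> E)"
  by (simp add: edge_prob_def block_prob_def del_prob_def add_prob_def)

lemma sum_edge_prob_total:
  assumes \<eta>: "0 \<le> \<eta>" "\<eta> \<le> 1"
  shows "(\<Sum>p\<in>A \<times> B. edge_prob \<eta> p) = d * (card A * card B)"
proof -
  \<comment> \<open>For \<open>\<eta> = 1\<close> the sum counts the edges of \<open>G\<close>, so the block deviations sum to zero.\<close>
  have "(\<Sum>p\<in>A \<times> B. edge_prob 1 p) = d * (card A * card B)"
    using e_G_eq_d_G_mult[OF finite_A finite_B, of E] finite_A finite_B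
    by (simp add: edge_prob_1 e_G_eq_card_Int)
  then have "(\<Sum>X\<in>\<A>. \<Sum>Y\<in>\<B>. (d_G E X Y - d) * (card X * card Y)) = 0"
    using sum_edge_prob_deviation[of 1 A B] by (simp add: Int_block del_prob_def add_prob_def)
  then show ?thesis
    using sum_edge_prob_deviation[OF \<eta> order.refl order.refl]
    by (simp add: Int_block sum_distrib_left[symmetric] mult.assoc)
qed

lemma sum_flip_prob:
  assumes \<eta>: "0 \<le> \<eta>" "\<eta> \<le> 1"
  shows "(\<Sum>p\<in>A \<times> B. if p \<in> E then 1 - edge_prob \<eta> p else edge_prob \<eta> p) = (1 - \<eta>) * Delta"
proof -
  define g where "g X Y b = (if b then del_prob \<eta> d (d_G E X Y) else add_prob \<eta> d (d_G E X Y))" for X Y b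
  have "(\<Sum>p\<in>A \<times> B. if p \<in> E then 1 - edge_prob \<eta> p else edge_prob \<eta> p)
      = (\<Sum>p\<in>A \<times> B. g (part_of \<A> (fst p)) (part_of \<B> (snd p)) (p \<in> E))"
    by (intro sum.cong refl) (auto simp: g_def edge_prob_def block_prob_def)
  also have "\<dots> = (\<Sum>X\<in>\<A>. \<Sum>Y\<in>\<B>. \<Sum>p\<in>X \<times> Y. g (part_of \<A> (fst p)) (part_of \<B> (snd p)) (p \<in> E))"
    using sum_product_partition[OF finite_A finite_B partition_A partition_B order.refl order.refl]
    by (simp add: Int_block)
  also have "\<dots> = (\<Sum>X\<in>\<A>. \<Sum>Y\<in>\<B>. (1 - \<eta>) * (\<bar>d_G E X Y - d\<bar> * card X * card Y))"
  proof (intro sum.cong refl)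
    fix X Y assume XY: "X \<in> \<A>" "Y \<in> \<B>"
    show "(\<Sum>p\<in>X \<times> Y. g (part_of \<A> (fst p)) (part_of \<B> (snd p)) (p \<in> E))
        = (1 - \<eta>) * (\<bar>d_G E X Y - d\<bar> * card X * card Y)"
      using del_add_prob_expected_cost[of \<eta> d "d_G E X Y"] \<eta>
      unfolding sum_blockwise[OF XY order.refl order.refl] by (simp add: g_def mult.assoc)
  qed
  finally show ?thesis
    by (simp add: Delta_def sum_distrib_left)
qed

lemma large_pair_doubled:
  assumes "large_pair (2 * \<epsilon>) S T" "A \<noteq> {}" "B \<noteq> {}"
  shows "large_pair \<epsilon> S T" "S \<noteq> {}" "T \<noteq> {}" "4 * \<epsilon>\<^sup>2 * (card A * card B) \<le> card S * card T"
proof -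
  have pos: "0 < real (card A)" "0 < real (card B)"
    using assms(2,3) finite_A finite_B by (auto simp: card_gt_0_iff)
  with assms(1) eps_pos have S: "2 * \<epsilon> * card A \<le> card S" "0 < 2 * \<epsilon> * card A"
    and T: "2 * \<epsilon> * card B \<le> card T" "0 < 2 * \<epsilon> * card B"
    unfolding large_pair_def by auto
  show "large_pair \<epsilon> S T"
    using assms(1) pos eps_pos unfolding large_pair_def by auto
  show "S \<noteq> {}" "T \<noteq> {}"
    using S T by auto
  have "(2 * \<epsilon> * card A) * (2 * \<epsilon> * card B) \<le> real (card S) * card T"
    using S T by (intro mult_mono) auto
  then show "4 * \<epsilon>\<^sup>2 * (card A * card B) \<le> card S * card T"
    by (simp add: power2_eq_square algebra_simps)
qed

lemma eps_regular_if_Delta_small: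
  assumes "A \<noteq> {}" "B \<noteq> {}" and small: "Delta \<le> 4 * \<epsilon>^3 * (card A * card B)"
  shows "eps_regular E (2 * \<epsilon>) A B"
  unfolding eps_regular_def
proof (intro allI impI)
  fix S T
  assume "S \<subseteq> A \<and> T \<subseteq> B \<and> 2 * \<epsilon> * real (card A) \<le> real (card S) \<and> 2 * \<epsilon> * real (card B) \<le> real (card T)"
  then have large: "large_pair (2 * \<epsilon>) S T"
    unfolding large_pair_def by blast
  note large' = large_pair_doubled[OF large assms(1,2)]
  have fin: "finite S" "finite T"
    using large finite_A finite_B finite_subset unfolding large_pair_def by metis+
  have "Delta \<le> \<epsilon> * (4 * \<epsilon>\<^sup>2 * (card A * card B))"
    using small by (simp add: power2_eq_square power3_eq_cube mult.assoc)
  also have "\<dots> \<le> \<epsilon> * (card S * card T)"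
    using large'(4) eps_pos by (intro mult_left_mono) auto
  finally have "Delta \<le> \<epsilon> * (card S * card T)" .
  moreover have "\<bar>real (e_G E S T) - d * (card S * card T)\<bar> \<le> Delta + \<epsilon> * (card S * card T)"
    using sum_edge_prob_deviation_le[of 1, OF _ _ large'(1)] block_deviation_bounds(2)[of S T] fin large
    by (simp add: edge_prob_1 e_G_eq_card_Int large_pair_def)
  ultimately have "\<bar>real (e_G E S T) - d * (card S * card T)\<bar> \<le> (2 * \<epsilon>) * (card S * card T)"
    by simp
  then show "\<bar>d - d_G E S T\<bar> \<le> 2 * \<epsilon>"
    using abs_d_G_diff_le[OF fin large'(2,3)] by (simp add: abs_minus_commute)
qed

definition modification_pmf :: "real \<Rightarrow> ('a \<times> 'a \<Rightarrow> bool) pmf" where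
  "modification_pmf \<eta> = Pi_pmf (A \<times> B) False (\<lambda>p. bernoulli_pmf (edge_prob \<eta> p))"

lemma edge_prob_bounds:
  assumes "0 \<le> \<eta>" "\<eta> \<le> 1" "p \<in> A \<times> B"
  shows "edge_prob \<eta> p \<in> {0..1}"
proof -
  obtain X Y where XY: "X \<in> \<A>" "fst p \<in> X" "Y \<in> \<B>" "snd p \<in> Y"
    using assms(3) partition_onD1[OF partition_A] partition_onD1[OF partition_B] by auto
  then have "part_of \<A> (fst p) = X" "part_of \<B> (snd p) = Y"
    using part_of_eq[OF partition_A] part_of_eq[OF partition_B] by auto
  then show ?thesis
    using del_add_prob_bounds[of \<eta> d "d_G E X Y"] assms(1,2)
    by (auto simp: edge_prob_def block_prob_def)
qed

lemma prob_edge_count_deviation: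
  assumes \<eta>: "0 \<le> \<eta>" "\<eta> \<le> 1" and ST: "S \<subseteq> A" "T \<subseteq> B" "S \<noteq> {}" "T \<noteq> {}" and "0 \<le> (\<theta>::real)"
  shows "measure_pmf.prob (modification_pmf \<eta>)
      {\<omega>. \<theta> * (card S * card T) \<le> \<bar>(\<Sum>p\<in>S \<times> T. of_bool (\<omega> p)) - (\<Sum>p\<in>S \<times> T. edge_prob \<eta> p)\<bar>}
    \<le> 2 * exp (- 2 * \<theta>\<^sup>2 * (card S * card T))"
proof -
  have "finite S" "finite T"
    using ST finite_A finite_B finite_subset by metis+
  with ST have n: "0 < real (card S * card T)"
    by (simp add: card_gt_0_iff)
  have "measure_pmf.prob (modification_pmf \<eta>)
      {\<omega>. \<theta> * (card S * card T) \<le> \<bar>(\<Sum>p\<in>S \<times> T. of_bool (\<omega> p)) - (\<Sum>p\<in>S \<times> T. of_bool True * edge_prob \<eta> p + of_bool False * (1 - edge_prob \<eta> p))\<bar>}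
    \<le> 2 * exp (- 2 * (\<theta> * (card S * card T))\<^sup>2 / card (S \<times> T))"
    unfolding modification_pmf_def
  proof (rule Pi_bernoulli_Hoeffding(2)[where h = "\<lambda>_ b. of_bool b"])
    show "finite (A \<times> B)" "S \<times> T \<subseteq> A \<times> B" "S \<times> T \<noteq> {}"
      using ST finite_A finite_B by auto
    show "edge_prob \<eta> p \<in> {0..1}" if "p \<in> A \<times> B" for p
      using edge_prob_bounds[OF \<eta> that] .
  qed (use \<open>0 \<le> \<theta>\<close> in auto)
  also have "- 2 * (\<theta> * (card S * card T))\<^sup>2 / card (S \<times> T) = - 2 * \<theta>\<^sup>2 * (card S * card T)"
    using n by (simp add: card_cartesian_product power2_eq_square)
  finally show ?thesis
    by simp
qed

lemma prob_flip_count_excess: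
  assumes \<eta>: "0 \<le> \<eta>" "\<eta> \<le> 1" and "A \<noteq> {}" "B \<noteq> {}" "0 \<le> t"
  shows "measure_pmf.prob (modification_pmf \<eta>)
      {\<omega>. (1 - \<eta>) * Delta + t \<le> (\<Sum>p\<in>A \<times> B. of_bool (\<omega> p \<noteq> (p \<in> E)))}
    \<le> exp (- 2 * t\<^sup>2 / (card A * card B))"
proof -
  have "measure_pmf.prob (modification_pmf \<eta>)
      {\<omega>. (\<Sum>p\<in>A \<times> B. of_bool (True \<noteq> (p \<in> E)) * edge_prob \<eta> p + of_bool (False \<noteq> (p \<in> E)) * (1 - edge_prob \<eta> p)) + t
          \<le> (\<Sum>p\<in>A \<times> B. of_bool (\<omega> p \<noteq> (p \<in> E)))}
    \<le> exp (- 2 * t\<^sup>2 / card (A \<times> B))"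
    unfolding modification_pmf_def
  proof (rule Pi_bernoulli_Hoeffding(1)[where h = "\<lambda>p b. of_bool (b \<noteq> (p \<in> E))"])
    show "finite (A \<times> B)" "A \<times> B \<noteq> {}"
      using assms finite_A finite_B by auto
    show "edge_prob \<eta> p \<in> {0..1}" if "p \<in> A \<times> B" for p
      using edge_prob_bounds[OF \<eta> that] .
  qed (use \<open>0 \<le> t\<close> in auto)
  also have "(\<Sum>p\<in>A \<times> B. of_bool (True \<noteq> (p \<in> E)) * edge_prob \<eta> p + of_bool (False \<noteq> (p \<in> E)) * (1 - edge_prob \<eta> p))
      = (1 - \<eta>) * Delta"
    unfolding sum_flip_prob[OF \<eta>, symmetric] by (intro sum.cong refl) auto
  finally show ?thesis
    by (simp only: card_cartesian_product)
qed

lemma exists_outcome_close_to_expectation: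
  assumes \<epsilon>: "\<epsilon> < 1/2" and A: "8 / \<epsilon>^4 \<le> card A" and B: "8 / \<epsilon>^4 \<le> card B"
    and large_Delta: "4 * \<epsilon>^3 * (card A * card B) < Delta"
  shows "\<exists>\<omega>. (\<forall>S T. large_pair (2 * \<epsilon>) S T \<longrightarrow>
            \<bar>(\<Sum>p\<in>S \<times> T. of_bool (\<omega> p)) - (\<Sum>p\<in>S \<times> T. edge_prob (\<epsilon> / 2) p)\<bar> < \<epsilon> / 4 * (card S * card T))
         \<and> (\<Sum>p\<in>A \<times> B. of_bool (\<omega> p \<noteq> (p \<in> E))) < Delta"
proof -
  define N where "N = real (card A * card B)"
  define M where "M = modification_pmf (\<epsilon> / 2)"
  define F where "F = {(S, T). large_pair (2 * \<epsilon>) S T}"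
  define deviates where "deviates = (\<lambda>(S, T). {\<omega>. \<epsilon> / 4 * (card S * card T)
      \<le> \<bar>(\<Sum>p\<in>S \<times> T. of_bool (\<omega> p)) - (\<Sum>p\<in>S \<times> T. edge_prob (\<epsilon> / 2) p)\<bar>})"
  define costly where "costly = {\<omega>. (1 - \<epsilon> / 2) * Delta + \<epsilon> / 2 * Delta \<le> (\<Sum>p\<in>A \<times> B. of_bool (\<omega> p \<noteq> (p \<in> E)))}"
  have "0 < 8 / \<epsilon>^4"
    using eps_pos by simp
  then have AB: "A \<noteq> {}" "B \<noteq> {}"
    using A B by auto
  have \<eta>: "0 \<le> \<epsilon> / 2" "\<epsilon> / 2 \<le> 1"
    using eps_pos \<epsilon> by auto
  have F: "finite F" "card F \<le> 2 ^ (card A + card B)"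
  proof -
    have sub: "F \<subseteq> Pow A \<times> Pow B"
      by (auto simp: F_def large_pair_def)
    then show "finite F"
      using finite_A finite_B finite_subset by blast
    have "card F \<le> card (Pow A \<times> Pow B)"
      using sub finite_A finite_B by (intro card_mono) auto
    then show "card F \<le> 2 ^ (card A + card B)"
      using finite_A finite_B by (simp add: card_cartesian_product card_Pow power_add)
  qed
  have prob_deviates: "measure_pmf.prob M (deviates x) \<le> 2 * exp (- (\<epsilon>^4 * N / 2))" if "x \<in> F" for x
  proof -
    obtain S T where x: "x = (S, T)" and large: "large_pair (2 * \<epsilon>) S T"
      using \<open>x \<in> F\<close> unfolding F_def by auto
    note large' = large_pair_doubled[OF large AB]
    have "\<epsilon>^4 * N / 2 = 2 * (\<epsilon> / 4)\<^sup>2 * (4 * \<epsilon>\<^sup>2 * (card A * card B))"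
      by (simp add: N_def power2_eq_square power4_eq_xxxx)
    also have "\<dots> \<le> 2 * (\<epsilon> / 4)\<^sup>2 * (card S * card T)"
      using large'(4) by (intro mult_left_mono) auto
    finally have exponent: "\<epsilon>^4 * N / 2 \<le> 2 * (\<epsilon> / 4)\<^sup>2 * (card S * card T)" .
    have "measure_pmf.prob M (deviates x) \<le> 2 * exp (- 2 * (\<epsilon> / 4)\<^sup>2 * (card S * card T))"
      unfolding M_def x deviates_def prod.case
      using large eps_pos by (intro prob_edge_count_deviation[OF \<eta> _ _ large'(2,3)]) (auto simp: large_pair_def)
    also have "\<dots> \<le> 2 * exp (- (\<epsilon>^4 * N / 2))"
      using exponent by simp
    finally show ?thesis .
  qed
  have prob_costly: "measure_pmf.prob M costly \<le> exp (- (8 * \<epsilon>^8 * N))"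
  proof -
    have "2 * \<epsilon>^4 * N = \<epsilon> / 2 * (4 * \<epsilon>^3 * N)"
      by (simp add: power4_eq_xxxx power3_eq_cube)
    also have "\<dots> \<le> \<epsilon> / 2 * Delta"
      using large_Delta eps_pos by (intro mult_left_mono) (auto simp: N_def)
    finally have "(2 * \<epsilon>^4 * N)\<^sup>2 \<le> (\<epsilon> / 2 * Delta)\<^sup>2"
      using eps_pos N_def by (intro power_mono) auto
    moreover have "0 < N"
      using AB finite_A finite_B by (simp add: N_def card_gt_0_iff)
    ultimately have "8 * \<epsilon>^8 * N \<le> 2 * (\<epsilon> / 2 * Delta)\<^sup>2 / N"
      by (simp add: field_simps power2_eq_square eval_nat_numeral)
    then have "exp (- 2 * (\<epsilon> / 2 * Delta)\<^sup>2 / N) \<le> exp (- (8 * \<epsilon>^8 * N))"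
      by simp
    moreover have "measure_pmf.prob M costly \<le> exp (- 2 * (\<epsilon> / 2 * Delta)\<^sup>2 / N)"
      unfolding M_def costly_def N_def
      using eps_pos Delta_nonneg by (intro prob_flip_count_excess[OF \<eta> AB]) simp
    ultimately show ?thesis
      by linarith
  qed
  have "measure_pmf.prob M ((\<Union>x\<in>F. deviates x) \<union> costly)
      \<le> (\<Sum>x\<in>F. measure_pmf.prob M (deviates x)) + measure_pmf.prob M costly"
    using measure_pmf.finite_measure_subadditive_finite[OF F(1), of deviates M]
      measure_Un_le[of "\<Union>x\<in>F. deviates x" M costly] by auto
  also have "\<dots> \<le> card F * (2 * exp (- (\<epsilon>^4 * N / 2))) + exp (- (8 * \<epsilon>^8 * N))"
    using sum_bounded_above[of F _ "2 * exp (- (\<epsilon>^4 * N / 2))"] prob_deviates prob_costly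
    by (simp add: add_mono)
  also have "\<dots> \<le> 2 ^ (card A + card B) * (2 * exp (- (\<epsilon>^4 * N / 2))) + exp (- (8 * \<epsilon>^8 * N))"
    using F(2) by (intro add_right_mono mult_right_mono) (auto simp flip: of_nat_power)
  also have "\<dots> < 1"
    unfolding N_def using union_bound_estimate[OF eps_pos _ A B] \<epsilon> by simp
  finally have "(\<Union>x\<in>F. deviates x) \<union> costly \<noteq> UNIV"
    using measure_pmf.prob_space[of M] by auto
  then obtain \<omega> where "\<omega> \<notin> (\<Union>x\<in>F. deviates x) \<union> costly"
    by blast
  then show ?thesis
    by (intro exI[of _ \<omega>]) (auto simp: F_def deviates_def costly_def algebra_simps not_le)
qed

lemma exists_close_modification:
  assumes "\<epsilon> < 1/2" "8 / \<epsilon>^4 \<le> card A" "8 / \<epsilon>^4 \<le> card B" "4 * \<epsilon>^3 * (card A * card B) < Delta"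
  shows "\<exists>E' \<subseteq> A \<times> B. (\<forall>S T. large_pair (2 * \<epsilon>) S T \<longrightarrow>
            \<bar>real (e_G E' S T) - (\<Sum>p\<in>S \<times> T. edge_prob (\<epsilon> / 2) p)\<bar> < \<epsilon> / 4 * (card S * card T))
         \<and> real (card ((E - E') \<union> (E' - E))) < Delta"
proof -
  obtain \<omega> where close: "\<And>S T. large_pair (2 * \<epsilon>) S T \<Longrightarrow>
      \<bar>(\<Sum>p\<in>S \<times> T. of_bool (\<omega> p)) - (\<Sum>p\<in>S \<times> T. edge_prob (\<epsilon> / 2) p)\<bar> < \<epsilon> / 4 * (card S * card T)"
    and cost: "(\<Sum>p\<in>A \<times> B. of_bool (\<omega> p \<noteq> (p \<in> E))) < Delta"
    using exists_outcome_close_to_expectation[OF assms] by blast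
  define E' where "E' = {p \<in> A \<times> B. \<omega> p}"
  have "real (e_G E' S T) = (\<Sum>p\<in>S \<times> T. of_bool (\<omega> p))" if "S \<subseteq> A" "T \<subseteq> B" for S T
  proof -
    have "S \<times> T \<inter> E' = S \<times> T \<inter> {p. \<omega> p}"
      using that by (auto simp: E'_def)
    moreover have "finite (S \<times> T)"
      using that finite_A finite_B finite_subset by blast
    ultimately show ?thesis
      by (simp add: e_G_eq_card_Int)
  qed
  moreover have "(E - E') \<union> (E' - E) = A \<times> B \<inter> {p. \<omega> p \<noteq> (p \<in> E)}"
    using E_subset by (auto simp: E'_def)
  ultimately show ?thesis
    using close cost finite_A finite_B by (intro exI[of _ E']) (auto simp: E'_def large_pair_def)
qed

lemma eps_regular_of_close_modification:
  assumes \<epsilon>: "\<epsilon> < 1/2" and AB: "A \<noteq> {}" "B \<noteq> {}"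
    and close: "\<And>S T. large_pair (2 * \<epsilon>) S T \<Longrightarrow>
      \<bar>real (e_G E' S T) - (\<Sum>p\<in>S \<times> T. edge_prob (\<epsilon> / 2) p)\<bar> < \<epsilon> / 4 * (card S * card T)"
  shows "eps_regular E' (2 * \<epsilon>) A B"
proof -
  have \<eta>: "0 \<le> \<epsilon> / 2" "\<epsilon> / 2 \<le> 1"
    using eps_pos \<epsilon> by auto
  have deviation: "\<bar>d_G E' S T - d\<bar> \<le> \<epsilon> / 4 + \<epsilon> / 2 + \<epsilon>" if large: "large_pair (2 * \<epsilon>) S T" for S T
  proof -
    note large' = large_pair_doubled[OF large AB]
    have fin: "finite S" "finite T"
      using large finite_A finite_B finite_subset unfolding large_pair_def by metis+
    let ?D = "\<Sum>X\<in>\<A>. \<Sum>Y\<in>\<B>. (d_G E X Y - d) * (card (S \<inter> X) * card (T \<inter> Y))"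
    have "\<epsilon> / 2 * \<bar>?D\<bar> \<le> \<epsilon> / 2 * (card S * card T)"
      using block_deviation_bounds(1)[of S T] large eps_pos
      unfolding large_pair_def by (intro mult_left_mono) auto
    let ?s = "\<Sum>p\<in>S \<times> T. edge_prob (\<epsilon> / 2) p"
    have "\<bar>?s - d * (card S * card T)\<bar> \<le> (\<epsilon> / 2 + \<epsilon>) * (card S * card T)"
      using sum_edge_prob_deviation_le[OF \<eta> large'(1)] \<open>\<epsilon> / 2 * \<bar>?D\<bar> \<le> _\<close>
      unfolding distrib_right by linarith
    moreover have "\<bar>real (e_G E' S T) - d * (card S * card T)\<bar>
        \<le> \<bar>real (e_G E' S T) - ?s\<bar> + \<bar>?s - d * (card S * card T)\<bar>"
      using abs_triangle_ineq[of "real (e_G E' S T) - ?s" "?s - d * (card S * card T)"] by simp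
    ultimately have "\<bar>real (e_G E' S T) - d * (card S * card T)\<bar> \<le> (\<epsilon> / 4 + \<epsilon> / 2 + \<epsilon>) * (card S * card T)"
      using close[OF large] unfolding distrib_right by linarith
    then show ?thesis
      by (rule abs_d_G_diff_le[OF fin large'(2,3)])
  qed
  have "\<bar>d_G E' A B - d\<bar> \<le> \<epsilon> / 4"
  proof (rule abs_d_G_diff_le[OF finite_A finite_B AB])
    have "2 * \<epsilon> * card A \<le> card A" "2 * \<epsilon> * card B \<le> card B"
      using \<epsilon> eps_pos by (intro mult_left_le_one_le; simp)+
    then have "large_pair (2 * \<epsilon>) A B"
      unfolding large_pair_def by simp
    from close[OF this] show "\<bar>real (e_G E' A B) - d * (card A * card B)\<bar> \<le> \<epsilon> / 4 * (card A * card B)"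
      by (simp add: sum_edge_prob_total[OF \<eta>])
  qed
  show ?thesis
    unfolding eps_regular_def
  proof (intro allI impI)
    fix S T
    assume "S \<subseteq> A \<and> T \<subseteq> B \<and> 2 * \<epsilon> * card A \<le> card S \<and> 2 * \<epsilon> * card B \<le> card T"
    then have "\<bar>d_G E' S T - d\<bar> \<le> \<epsilon> / 4 + \<epsilon> / 2 + \<epsilon>"
      using deviation unfolding large_pair_def by blast
    with \<open>\<bar>d_G E' A B - d\<bar> \<le> \<epsilon> / 4\<close> show "\<bar>d_G E' A B - d_G E' S T\<bar> \<le> 2 * \<epsilon>"
      by arith
  qed
qed

end

theorem lemma2p3:
  fixes E :: "('a \<times> 'a) set" and A B :: "'a set" and \<A> \<B> :: "'a set set" and \<epsilon> :: real
  assumes "finite A" and "finite B" and "A \<inter> B = {}"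
    and "E \<subseteq> A \<times> B"
    and "partition_on A \<A>" and "partition_on B \<B>"
    and "0 < \<epsilon>"
    and "weak_regular E \<epsilon> A B \<A> \<B>"
    and "real (card A) \<ge> 8 / \<epsilon> ^ 4" and "real (card B) \<ge> 8 / \<epsilon> ^ 4"
  shows "\<exists>E'. E' \<subseteq> A \<times> B \<and> eps_regular E' (2 * \<epsilon>) A B
     \<and> real (card ((E - E') \<union> (E' - E)))
         \<le> (\<Sum>Ai\<in>\<A>. \<Sum>Bj\<in>\<B>. \<bar>d_G E Ai Bj - d_G E A B\<bar> * real (card Ai) * real (card Bj))"
proof -
  interpret weakly_regular_partition E A B \<A> \<B> \<epsilon>
    using assms by unfold_locales
  have "0 < 8 / \<epsilon> ^ 4"
    using assms(7) by simp
  then have AB: "A \<noteq> {}" "B \<noteq> {}"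
    using assms(9,10) by auto
  consider "1/2 \<le> \<epsilon>" | "\<epsilon> < 1/2" "Delta \<le> 4 * \<epsilon>^3 * (card A * card B)"
    | "\<epsilon> < 1/2" "4 * \<epsilon>^3 * (card A * card B) < Delta"
    by linarith
  then have "\<exists>E'. E' \<subseteq> A \<times> B \<and> eps_regular E' (2 * \<epsilon>) A B \<and> real (card ((E - E') \<union> (E' - E))) \<le> Delta"
  proof cases
    case 1
    then have "eps_regular E (2 * \<epsilon>) A B"
      by (intro eps_regular_if_ge_1) simp
    then show ?thesis
      using E_subset Delta_nonneg by (intro exI[of _ E]) auto
  next
    case 2
    then show ?thesis
      using eps_regular_if_Delta_small[OF AB] E_subset Delta_nonneg by (intro exI[of _ E]) auto
  next
    case 3
    then show ?thesis
      using exists_close_modification[OF _ assms(9,10)] eps_regular_of_close_modification[OF _ AB]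
      by (meson less_le)
  qed
  then show ?thesis
    unfolding Delta_def .
qed

end
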